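(* Let $\mathcal{R}$ be a cell space with finite stabiliser $G_0$, let $F,F'$ be finite subsets of $M$ and let $\mathfrak{g},\mathfrak{g}'\in G/G_0$. Then $|(\cdot\triangleleft\mathfrak{g})^{-1}(F)\setminus(\cdot\triangleleft\mathfrak{g}')^{-1}(F')|\leq|G_0|^2\cdot\max_{g\in\mathfrak{g}}|F\setminus(\cdot\triangleleft g^{-1}\cdot\mathfrak{g}')^{-1}(F')|$ and $|(\cdot\triangleleft\mathfrak{g})^{-1}(F)\setminus(\cdot\triangleleft\mathfrak{g}')^{-1}(F')|\leq|G_0|^2\cdot\max_{g'\in\mathfrak{g}'}|(\cdot\triangleleft(g')^{-1}\cdot\mathfrak{g})^{-1}(F)\setminus F'|$.
   Context: A cell space $\mathcal{R}$ consists of a group $G$ acting transitively on the left on a nonempty set $M$ via $\triangleright$, a point $m_0\in M$ and a family $(g_{m_0,m})_{m\in M}$ in $G$ with $g_{m_0,m}\triangleright m_0=m$. $G_0$ is the stabiliser of $m_0$, $G/G_0$ the set of left cosets (elements are subsets of $G$), with $G$ acting by $g\cdot hG_0=ghG_0$. The right semi-action $\triangleleft\colon M\times G/G_0\to M$ is $m\triangleleft gG_0=g_{m_0,m}g\triangleright m_0$, and $(\cdot\triangleleft\mathfrak{h})^{-1}(B)=\{m\in M: m\triangleleft\mathfrak{h}\in B\}$. *)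

theory Defs
  imports "HOL-Algebra.Group_Action"
begin

definition cell_space ::
  "('g, 'b) monoid_scheme \<Rightarrow> 'm set \<Rightarrow> ('g \<Rightarrow> 'm \<Rightarrow> 'm) \<Rightarrow> 'm \<Rightarrow> ('m \<Rightarrow> 'g) \<Rightarrow> bool" where
  "cell_space G M act m0 gm \<longleftrightarrow>
     group G \<and> transitive_action G M act \<and> M \<noteq> {} \<and> m0 \<in> M \<and>
     (\<forall>m\<in>M. gm m \<in> carrier G \<and> act (gm m) m0 = m)"

definition cell_cosets ::
  "('g, 'b) monoid_scheme \<Rightarrow> ('g \<Rightarrow> 'm \<Rightarrow> 'm) \<Rightarrow> 'm \<Rightarrow> 'g set set" where
  "cell_cosets G act m0 = {g <#\<^bsub>G\<^esub> stabilizer G act m0 | g. g \<in> carrier G}"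

text \<open>Right semi-action m \<triangleleft> gG_0 = g_{m0,m} g \<triangleright> m0 (well-defined on cosets;
  we evaluate at an arbitrary representative of the coset).\<close>
definition semi_act ::
  "('g, 'b) monoid_scheme \<Rightarrow> ('g \<Rightarrow> 'm \<Rightarrow> 'm) \<Rightarrow> 'm \<Rightarrow> ('m \<Rightarrow> 'g) \<Rightarrow> 'm \<Rightarrow> 'g set \<Rightarrow> 'm" where
  "semi_act G act m0 gm m C = act (gm m \<otimes>\<^bsub>G\<^esub> (SOME g. g \<in> C)) m0"

definition semi_preimage ::
  "('g, 'b) monoid_scheme \<Rightarrow> 'm set \<Rightarrow> ('g \<Rightarrow> 'm \<Rightarrow> 'm) \<Rightarrow> 'm \<Rightarrow> ('m \<Rightarrow> 'g) \<Rightarrow> 'g set \<Rightarrow> 'm set \<Rightarrow> 'm set" where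
  "semi_preimage G M act m0 gm C B = {m \<in> M. semi_act G act m0 gm m C \<in> B}"

end

theory Submission
  imports Defs
begin

text \<open>If n = m \<triangleleft> \<gg>, then gm m = gm n \<otimes> inv g for some g \<in> \<gg>; hence every fibre of
  m \<mapsto> m \<triangleleft> \<gg> has at most |G0| points, and (m \<triangleleft> \<gg>) \<triangleleft> (inv g <# \<gg>') = m \<triangleleft> \<gg>' for
  that g. So every m in the difference of preimages lies in the preimage under \<triangleleft> \<gg> of
  F minus the preimage of F' under \<triangleleft> (inv g <# \<gg>') for one of the |G0| elements g \<in> \<gg>, and
  each of these preimages has at most |G0| times as many points as the set; the second bound
  is symmetric.\<close>

locale cell_space_setting =
  fixes G :: "('g, 'b) monoid_scheme" (structure) and M :: "'m set" and act :: "'g \<Rightarrow> 'm \<Rightarrow> 'm"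
    and m0 :: 'm and gm :: "'m \<Rightarrow> 'g"
  assumes cell_space: "cell_space G M act m0 gm"
begin

abbreviation G0 :: "'g set" where "G0 \<equiv> stabilizer G act m0"

abbreviation semi_act_on :: "'m \<Rightarrow> 'g set \<Rightarrow> 'm" (infixl "\<triangleleft>" 70)
  where "m \<triangleleft> C \<equiv> semi_act G act m0 gm m C"

abbreviation preimage_semi_act :: "'g set \<Rightarrow> 'm set \<Rightarrow> 'm set"
  where "preimage_semi_act C B \<equiv> semi_preimage G M act m0 gm C B"

sublocale group G
  using cell_space unfolding cell_space_def by auto

sublocale group_action G M act
  using cell_space unfolding cell_space_def transitive_action_def by auto

lemma m0_in_M: "m0 \<in> M"
  using cell_space unfolding cell_space_def by auto

lemma gm_closed: "m \<in> M \<Longrightarrow> gm m \<in> carrier G"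
  using cell_space unfolding cell_space_def by auto

lemma act_gm: "m \<in> M \<Longrightarrow> act (gm m) m0 = m"
  using cell_space unfolding cell_space_def by auto

lemma subgroup_G0: "subgroup G0 G"
  using stabilizer_subgroup[OF m0_in_M] .

lemma act_inv_act:
  assumes "g \<in> carrier G" "x \<in> M"
  shows "act (inv g) (act g x) = x"
proof -
  have "act (inv g) (act g x) = act (inv g \<otimes> g) x"
    using composition_rule[OF assms(2) inv_closed[OF assms(1)] assms(1)] by simp
  also have "\<dots> = act \<one> x"
    using assms by simp
  also have "\<dots> = x"
    using id_eq_one assms(2) by (metis restrict_apply')
  finally show ?thesis .
qed

lemma act_mult_stabilizer:
  assumes "g \<in> carrier G" "h \<in> G0"
  shows "act (g \<otimes> h) m0 = act g m0"
  using assms composition_rule[OF m0_in_M] unfolding stabilizer_def by auto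

lemma cell_coset_subset_carrier: "\<gg> \<in> cell_cosets G act m0 \<Longrightarrow> \<gg> \<subseteq> carrier G"
  unfolding cell_cosets_def using l_coset_subset_G subgroup.subset[OF subgroup_G0] by auto

lemma cell_coset_eq_l_coset:
  assumes "\<gg> \<in> cell_cosets G act m0" "g \<in> \<gg>"
  shows "\<gg> = g <# G0"
  using assms l_repr_independence[OF _ _ subgroup_G0] unfolding cell_cosets_def by auto

lemma cell_coset_nonempty: "\<gg> \<in> cell_cosets G act m0 \<Longrightarrow> \<exists>g. g \<in> \<gg>"
  unfolding cell_cosets_def l_coset_def using subgroup.one_closed[OF subgroup_G0] by blast

lemma l_coset_cell_coset:
  assumes "\<gg> \<in> cell_cosets G act m0" "x \<in> carrier G"
  shows "x <# \<gg> \<in> cell_cosets G act m0"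
  using assms lcos_m_assoc[OF subgroup.subset[OF subgroup_G0]] unfolding cell_cosets_def by auto

lemma card_cell_coset:
  assumes "\<gg> \<in> cell_cosets G act m0"
  shows "card \<gg> = card G0" and "finite \<gg> \<longleftrightarrow> finite G0"
proof -
  obtain k where k: "k \<in> carrier G" "\<gg> = (\<lambda>h. k \<otimes> h) ` G0"
    using assms unfolding cell_cosets_def l_coset_def by auto
  have "inj_on (\<lambda>h. k \<otimes> h) G0"
    using k(1) by (intro inj_onI) (simp add: subgroup.mem_carrier[OF subgroup_G0])
  then show "card \<gg> = card G0" "finite \<gg> \<longleftrightarrow> finite G0"
    using k(2) by (simp_all add: card_image finite_image_iff)
qed

lemma semi_act_eq:
  assumes "\<gg> \<in> cell_cosets G act m0" "g \<in> \<gg>" "m \<in> M"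
  shows "m \<triangleleft> \<gg> = act (gm m \<otimes> g) m0"
proof -
  have g: "g \<in> carrier G"
    using assms cell_coset_subset_carrier by auto
  have "(SOME k. k \<in> \<gg>) \<in> g <# G0"
    using assms cell_coset_eq_l_coset by (metis someI)
  then obtain h where h: "h \<in> G0" "(SOME k. k \<in> \<gg>) = g \<otimes> h"
    unfolding l_coset_def by auto
  have "act (gm m \<otimes> (g \<otimes> h)) m0 = act (gm m \<otimes> g \<otimes> h) m0"
    using g h(1) gm_closed[OF assms(3)] subgroup.mem_carrier[OF subgroup_G0] by (simp add: m_assoc)
  also have "\<dots> = act (gm m \<otimes> g) m0"
    using act_mult_stabilizer g gm_closed[OF assms(3)] h(1) by simp
  finally show ?thesis
    unfolding semi_act_def h(2) .
qed

lemma semi_act_closed: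
  assumes "\<gg> \<in> cell_cosets G act m0" "m \<in> M"
  shows "m \<triangleleft> \<gg> \<in> M"
proof -
  obtain g where g: "g \<in> \<gg>"
    using cell_coset_nonempty[OF assms(1)] by blast
  then have "gm m \<otimes> g \<in> carrier G"
    using assms cell_coset_subset_carrier gm_closed by blast
  then show ?thesis
    unfolding semi_act_eq[OF assms(1) g assms(2)] using element_image[OF _ m0_in_M refl] by blast
qed

lemma gm_eq_gm_semi_act_mult_inv:
  assumes \<gg>: "\<gg> \<in> cell_cosets G act m0" and m: "m \<in> M"
  shows "\<exists>a\<in>\<gg>. gm m = gm (m \<triangleleft> \<gg>) \<otimes> inv a"
proof -
  obtain k where k: "k \<in> \<gg>"
    using cell_coset_nonempty[OF \<gg>] by blast
  have kc: "k \<in> carrier G"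
    using k cell_coset_subset_carrier[OF \<gg>] by auto
  define n where "n = m \<triangleleft> \<gg>"
  have n: "n \<in> M" "act (gm m \<otimes> k) m0 = n"
    unfolding n_def using semi_act_closed[OF \<gg> m] semi_act_eq[OF \<gg> k m] by auto
  have gc: "gm n \<in> carrier G" "gm m \<in> carrier G"
    using gm_closed n(1) m by auto
  define h where "h = inv (gm n) \<otimes> (gm m \<otimes> k)"
  have hc: "h \<in> carrier G"
    unfolding h_def using gc kc by simp
  have "act h m0 = act (inv (gm n)) (act (gm n) m0)"
    unfolding h_def using composition_rule[OF m0_in_M] gc kc n(2) act_gm[OF n(1)] by simp
  then have "h \<in> G0"
    using act_inv_act[OF gc(1) m0_in_M] hc unfolding stabilizer_def by simp
  then have "k \<otimes> inv h \<in> \<gg>"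
    using cell_coset_eq_l_coset[OF \<gg> k] subgroup.m_inv_closed[OF subgroup_G0]
    unfolding l_coset_def by blast
  moreover have "gm n \<otimes> inv (k \<otimes> inv h) = gm m"
    unfolding h_def using gc kc
    by (simp add: inv_mult_group m_assoc[symmetric])
  ultimately show ?thesis
    unfolding n_def by metis
qed

lemma semi_act_fiber_subset:
  assumes "\<gg> \<in> cell_cosets G act m0"
  shows "{m \<in> M. m \<triangleleft> \<gg> = n} \<subseteq> (\<lambda>a. act (gm n \<otimes> inv a) m0) ` \<gg>"
proof
  fix m assume "m \<in> {m \<in> M. m \<triangleleft> \<gg> = n}"
  then have m: "m \<in> M" "m \<triangleleft> \<gg> = n" by auto
  then obtain a where "a \<in> \<gg>" "gm m = gm n \<otimes> inv a"
    using gm_eq_gm_semi_act_mult_inv[OF assms] by blast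
  then show "m \<in> (\<lambda>a. act (gm n \<otimes> inv a) m0) ` \<gg>"
    using act_gm[OF m(1)] by force
qed

lemma
  assumes "\<gg> \<in> cell_cosets G act m0" "finite G0" "finite S"
  shows finite_preimage_semi_act: "finite (preimage_semi_act \<gg> S)"
    and card_preimage_semi_act_le: "card (preimage_semi_act \<gg> S) \<le> card G0 * card S"
proof -
  let ?cover = "\<Union>n\<in>S. (\<lambda>a. act (gm n \<otimes> inv a) m0) ` \<gg>"
  have fin\<gg>: "finite \<gg>"
    using assms card_cell_coset(2) by blast
  have fin: "finite ?cover"
    using assms(3) fin\<gg> by blast
  have sub: "preimage_semi_act \<gg> S \<subseteq> ?cover"
    using semi_act_fiber_subset[OF assms(1)] unfolding semi_preimage_def by blast
  show "finite (preimage_semi_act \<gg> S)"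
    using finite_subset[OF sub fin] .
  have "card (preimage_semi_act \<gg> S) \<le> card ?cover"
    using card_mono[OF fin sub] .
  also have "\<dots> \<le> (\<Sum>n\<in>S. card ((\<lambda>a. act (gm n \<otimes> inv a) m0) ` \<gg>))"
    using card_UN_le[OF assms(3)] .
  also have "\<dots> \<le> (\<Sum>n\<in>S. card G0)"
    using card_image_le[OF fin\<gg>] card_cell_coset(1)[OF assms(1)] by (intro sum_mono) auto
  finally show "card (preimage_semi_act \<gg> S) \<le> card G0 * card S"
    by (simp add: mult.commute)
qed

lemma card_le_card_stabilizer_sq_Max:
  assumes \<gg>: "\<gg> \<in> cell_cosets G act m0" and fin: "finite G0"
    and D: "\<And>g. g \<in> \<gg> \<Longrightarrow> finite (D g)"
    and X: "X \<subseteq> (\<Union>g\<in>\<gg>. preimage_semi_act \<gg> (D g))"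
  shows "card X \<le> card G0 ^ 2 * Max ((\<lambda>g. card (D g)) ` \<gg>)"
proof -
  let ?Mx = "Max ((\<lambda>g. card (D g)) ` \<gg>)"
  have fin\<gg>: "finite \<gg>"
    using card_cell_coset(2)[OF \<gg>] fin by simp
  have "card X \<le> card (\<Union>g\<in>\<gg>. preimage_semi_act \<gg> (D g))"
    using X fin\<gg> D finite_preimage_semi_act[OF \<gg> fin] by (intro card_mono) auto
  also have "\<dots> \<le> (\<Sum>g\<in>\<gg>. card (preimage_semi_act \<gg> (D g)))"
    using card_UN_le[OF fin\<gg>] .
  also have "\<dots> \<le> (\<Sum>g\<in>\<gg>. card G0 * ?Mx)"
  proof (rule sum_mono)
    fix g assume g: "g \<in> \<gg>"
    have "card (preimage_semi_act \<gg> (D g)) \<le> card G0 * card (D g)"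
      using card_preimage_semi_act_le[OF \<gg> fin D[OF g]] .
    also have "\<dots> \<le> card G0 * ?Mx"
      using g fin\<gg> by simp
    finally show "card (preimage_semi_act \<gg> (D g)) \<le> card G0 * ?Mx" .
  qed
  also have "\<dots> = card G0 ^ 2 * ?Mx"
    using card_cell_coset(1)[OF \<gg>] by (simp add: power2_eq_square)
  finally show ?thesis .
qed

text \<open>The representative g depends on m: it is chosen so that gm m = gm (m \<triangleleft> \<gg>) \<otimes> inv g.\<close>

lemma semi_act_semi_act:
  assumes \<gg>: "\<gg> \<in> cell_cosets G act m0" and \<gg>': "\<gg>' \<in> cell_cosets G act m0" and m: "m \<in> M"
  shows "\<exists>g\<in>\<gg>. m \<triangleleft> \<gg> \<triangleleft> (inv g <# \<gg>') = m \<triangleleft> \<gg>'"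
proof -
  obtain g where g: "g \<in> \<gg>" "gm m = gm (m \<triangleleft> \<gg>) \<otimes> inv g"
    using gm_eq_gm_semi_act_mult_inv[OF \<gg> m] by blast
  obtain l where l: "l \<in> \<gg>'"
    using cell_coset_nonempty[OF \<gg>'] by blast
  have c: "inv g \<in> carrier G" "l \<in> carrier G" "gm (m \<triangleleft> \<gg>) \<in> carrier G"
    using g(1) l cell_coset_subset_carrier[OF \<gg>] cell_coset_subset_carrier[OF \<gg>']
      gm_closed[OF semi_act_closed[OF \<gg> m]] by auto
  have "inv g \<otimes> l \<in> inv g <# \<gg>'"
    using l unfolding l_coset_def by blast
  then have "m \<triangleleft> \<gg> \<triangleleft> (inv g <# \<gg>') = act (gm (m \<triangleleft> \<gg>) \<otimes> (inv g \<otimes> l)) m0"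
    using semi_act_eq l_coset_cell_coset[OF \<gg>' c(1)] semi_act_closed[OF \<gg> m] by blast
  also have "\<dots> = act (gm m \<otimes> l) m0"
    using g(2) c by (simp add: m_assoc)
  also have "\<dots> = m \<triangleleft> \<gg>'"
    using semi_act_eq[OF \<gg>' l m] by simp
  finally show ?thesis
    using g(1) by blast
qed

lemma card_preimage_semi_act_diff_le:
  assumes \<gg>: "\<gg> \<in> cell_cosets G act m0" and \<gg>': "\<gg>' \<in> cell_cosets G act m0"
    and fin: "finite G0" and F: "finite F" and F': "finite F'"
  shows "card (preimage_semi_act \<gg> F - preimage_semi_act \<gg>' F')
           \<le> card G0 ^ 2 * Max ((\<lambda>g. card (F - preimage_semi_act (inv g <# \<gg>') F')) ` \<gg>)"
    and "card (preimage_semi_act \<gg> F - preimage_semi_act \<gg>' F')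
           \<le> card G0 ^ 2 * Max ((\<lambda>g'. card (preimage_semi_act (inv g' <# \<gg>) F - F')) ` \<gg>')"
proof -
  let ?X = "preimage_semi_act \<gg> F - preimage_semi_act \<gg>' F'"
  have "?X \<subseteq> (\<Union>g\<in>\<gg>. preimage_semi_act \<gg> (F - preimage_semi_act (inv g <# \<gg>') F'))"
  proof
    fix m assume "m \<in> ?X"
    then have m: "m \<in> M" "m \<triangleleft> \<gg> \<in> F" "m \<triangleleft> \<gg>' \<notin> F'"
      unfolding semi_preimage_def by auto
    obtain g where g: "g \<in> \<gg>" "m \<triangleleft> \<gg> \<triangleleft> (inv g <# \<gg>') = m \<triangleleft> \<gg>'"
      using semi_act_semi_act[OF \<gg> \<gg>' m(1)] by blast
    have "m \<triangleleft> \<gg> \<in> F - preimage_semi_act (inv g <# \<gg>') F'"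
      using g(2) m unfolding semi_preimage_def by auto
    then have "m \<in> preimage_semi_act \<gg> (F - preimage_semi_act (inv g <# \<gg>') F')"
      using m(1) unfolding semi_preimage_def by simp
    with g(1) show "m \<in> (\<Union>g\<in>\<gg>. preimage_semi_act \<gg> (F - preimage_semi_act (inv g <# \<gg>') F'))"
      by blast
  qed
  then show "card ?X \<le> card G0 ^ 2 * Max ((\<lambda>g. card (F - preimage_semi_act (inv g <# \<gg>') F')) ` \<gg>)"
    using F by (intro card_le_card_stabilizer_sq_Max[OF \<gg> fin]) auto
  have "?X \<subseteq> (\<Union>g'\<in>\<gg>'. preimage_semi_act \<gg>' (preimage_semi_act (inv g' <# \<gg>) F - F'))"
  proof
    fix m assume "m \<in> ?X"
    then have m: "m \<in> M" "m \<triangleleft> \<gg> \<in> F" "m \<triangleleft> \<gg>' \<notin> F'"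
      unfolding semi_preimage_def by auto
    obtain g' where g': "g' \<in> \<gg>'" "m \<triangleleft> \<gg>' \<triangleleft> (inv g' <# \<gg>) = m \<triangleleft> \<gg>"
      using semi_act_semi_act[OF \<gg>' \<gg> m(1)] by blast
    have "m \<triangleleft> \<gg>' \<in> preimage_semi_act (inv g' <# \<gg>) F - F'"
      using g'(2) m semi_act_closed[OF \<gg>' m(1)] unfolding semi_preimage_def by auto
    then have "m \<in> preimage_semi_act \<gg>' (preimage_semi_act (inv g' <# \<gg>) F - F')"
      using m(1) unfolding semi_preimage_def by simp
    with g'(1) show "m \<in> (\<Union>g'\<in>\<gg>'. preimage_semi_act \<gg>' (preimage_semi_act (inv g' <# \<gg>) F - F'))"
      by blast
  qed
  moreover have "finite (preimage_semi_act (inv g' <# \<gg>) F - F')" if "g' \<in> \<gg>'" for g'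
  proof -
    have "inv g' \<in> carrier G"
      using that cell_coset_subset_carrier[OF \<gg>'] by auto
    then show ?thesis
      using finite_preimage_semi_act[OF l_coset_cell_coset[OF \<gg>] fin F] by simp
  qed
  ultimately show "card ?X \<le> card G0 ^ 2 * Max ((\<lambda>g'. card (preimage_semi_act (inv g' <# \<gg>) F - F')) ` \<gg>')"
    by (rule card_le_card_stabilizer_sq_Max[OF \<gg>' fin, rotated])
qed

end

theorem lemma6:
  fixes G :: "('g, 'b) monoid_scheme" and M :: "'m set" and act :: "'g \<Rightarrow> 'm \<Rightarrow> 'm"
    and m0 :: 'm and gm :: "'m \<Rightarrow> 'g"
    and F F' :: "'m set" and \<gg> \<gg>' :: "'g set"
  assumes cs: "cell_space G M act m0 gm"
    and fin0: "finite (stabilizer G act m0)"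
    and F: "finite F" "F \<subseteq> M"
    and F': "finite F'" "F' \<subseteq> M"
    and g: "\<gg> \<in> cell_cosets G act m0"
    and g': "\<gg>' \<in> cell_cosets G act m0"
  shows "finite (semi_preimage G M act m0 gm \<gg> F - semi_preimage G M act m0 gm \<gg>' F')
       \<and> card (semi_preimage G M act m0 gm \<gg> F - semi_preimage G M act m0 gm \<gg>' F')
           \<le> card (stabilizer G act m0) ^ 2 *
             Max ((\<lambda>g. card (F - semi_preimage G M act m0 gm (inv\<^bsub>G\<^esub> g <#\<^bsub>G\<^esub> \<gg>') F')) ` \<gg>)
       \<and> card (semi_preimage G M act m0 gm \<gg> F - semi_preimage G M act m0 gm \<gg>' F')
           \<le> card (stabilizer G act m0) ^ 2 *
             Max ((\<lambda>g'. card (semi_preimage G M act m0 gm (inv\<^bsub>G\<^esub> g' <#\<^bsub>G\<^esub> \<gg>) F - F')) ` \<gg>')"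
proof -
  interpret cell_space_setting G M act m0 gm
    using cs by unfold_locales
  show ?thesis
    using finite_preimage_semi_act[OF g fin0 F(1)] card_preimage_semi_act_diff_le[OF g g' fin0 F(1) F'(1)]
    by blast
qed

end
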